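(* For all integers $n\ge0$ and $p\ge1$, $$\mathcal{B}_{n,p}=p\int_0^1(1-t)^{p-1}\phi_n(t)\,dt.$$
   Context: $S(n,k)$ denotes the Stirling numbers of the second kind and $\phi_n(t)=\sum_{k=0}^nS(n,k)t^k$ the Bell (exponential) polynomials. For an integer $p\ge0$, the $p$-Bell numbers $\mathcal{B}_{n,p}$ are defined by $\sum_{n\ge0}\mathcal{B}_{n,p}\frac{z^n}{n!}=\sum_{n\ge0}\binom{n+p}{p}^{-1}\frac{(e^z-1)^n}{n!}$. *)

theory Defs
  imports "HOL-Analysis.Analysis" "HOL-Combinatorics.Stirling"
    "HOL-Computational_Algebra.Formal_Power_Series"
begin

definition bell_poly :: "nat \<Rightarrow> real \<Rightarrow> real" where
  "bell_poly n t = (\<Sum>k\<le>n. real (Stirling n k) * t ^ k)"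

text \<open>Exponential generating function of the p-Bell numbers, as the formal power series
  sum over k of binom(k+p,p)^(-1) (e^z - 1)^k / k!.  Since (e^z - 1)^k has order k,
  only the terms k <= n contribute to the n-th coefficient, so this is the formal sum.\<close>
definition pBell_egf :: "nat \<Rightarrow> real fps" where
  "pBell_egf p = Abs_fps (\<lambda>n. \<Sum>k\<le>n.
      fps_nth ((fps_exp 1 - 1) ^ k / fps_const (fact k)) n / real ((k + p) choose p))"

definition pBell :: "nat \<Rightarrow> nat \<Rightarrow> real" where
  "pBell n p = fact n * fps_nth (pBell_egf p) n"

end

theory Submission
  imports Defs
begin

text \<open>
  Expanding the egf, k! S(n,k) = n! [z^n] (e^z - 1)^k gives
  B(n,p) = sum_k S(n,k) / binom(k+p,p).  On the other hand, integrating phi_n term by term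
  against p (1-t)^(p-1) produces the Beta integrals p B(k+1,p) = p k! (p-1)! / (k+p)!,
  which are exactly 1 / binom(k+p,p).
\<close>

lemma fps_deriv_exp_minus_one_power:
  "fps_deriv ((fps_exp 1 - 1 :: 'a :: field_char_0 fps) ^ Suc j) =
     of_nat (Suc j) * ((fps_exp 1 - 1) ^ Suc j + (fps_exp 1 - 1) ^ j)"
proof -
  let ?E = "fps_exp 1 - 1 :: 'a fps"
  have "fps_deriv (?E ^ Suc j) = of_nat (Suc j) * fps_deriv ?E * ?E ^ j"
    by (subst fps_deriv_power') simp
  also have "fps_deriv ?E = ?E + 1"
    by simp
  finally show ?thesis
    by (simp add: algebra_simps)
qed

text \<open>The recurrence of the previous lemma mirrors S(m+1,j+1) = (j+1) S(m,j+1) + S(m,j).\<close>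

lemma fact_times_fps_nth_exp_minus_one_power:
  "fact n * fps_nth ((fps_exp 1 - 1 :: 'a :: field_char_0 fps) ^ k) n =
     fact k * of_nat (Stirling n k)"
proof (induction n arbitrary: k)
  case 0
  then show ?case
    by (cases k) (simp_all add: fps_nth_power_0)
next
  case (Suc m)
  show ?case
  proof (cases k)
    case 0
    then show ?thesis
      by simp
  next
    case (Suc j)
    let ?E = "fps_exp 1 - 1 :: 'a fps"
    have "fact (Suc m) * fps_nth (?E ^ Suc j) (Suc m) =
        fact m * fps_nth (fps_deriv (?E ^ Suc j)) m"
      by (simp only: fps_deriv_nth fact_Suc Suc_eq_plus1) (simp add: algebra_simps)
    also have "\<dots> = of_nat (Suc j) *
        (fact m * fps_nth (?E ^ Suc j) m + fact m * fps_nth (?E ^ j) m)"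
      unfolding fps_deriv_exp_minus_one_power fps_of_nat[symmetric] fps_mult_left_const_nth fps_add_nth
      by (simp only: ring_distribs mult_ac)
    also have "\<dots> = fact (Suc j) * of_nat (Stirling (Suc m) (Suc j))"
      unfolding Suc.IH by (simp add: algebra_simps)
    finally show ?thesis
      using Suc by simp
  qed
qed

lemma pBell_eq_sum_Stirling:
  "pBell n p = (\<Sum>k\<le>n. real (Stirling n k) / real ((k + p) choose p))"
proof -
  have "fact n * fps_nth ((fps_exp 1 - 1) ^ k / fps_const (fact k)) n = real (Stirling n k)" for k
    using fact_times_fps_nth_exp_minus_one_power[of n k, where 'a = real]
    by (simp add: field_simps)
  then show ?thesis
    unfolding pBell_def pBell_egf_def by (simp add: sum_distrib_left sum_divide_distrib)
qed

lemma has_integral_power_mult_power_one_minus: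
  "((\<lambda>t::real. t ^ a * (1 - t) ^ b) has_integral fact a * fact b / fact (a + b + 1)) {0..1}"
proof -
  have "Beta (real a + 1) (real b + 1) = fact a * fact b / fact (a + b + 1)"
    using Gamma_fact[of a, where 'a = real] Gamma_fact[of b, where 'a = real]
      Gamma_fact[of "a + b + 1", where 'a = real]
    by (simp add: Beta_def algebra_simps)
  moreover have "((\<lambda>t. t powr real a * (1 - t) powr real b) has_integral
      Beta (real a + 1) (real b + 1)) {0<..<1}"
    using has_integral_Beta_real[of "real a + 1" "real b + 1"]
    by (simp add: has_integral_Icc_iff_Ioo)
  ultimately have powr_integral: "((\<lambda>t. t powr real a * (1 - t) powr real b) has_integral
      fact a * fact b / fact (a + b + 1)) {0<..<1}"
    by simp
  have "((\<lambda>t::real. t ^ a * (1 - t) ^ b) has_integral fact a * fact b / fact (a + b + 1))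
      {0<..<1}"
    by (rule has_integral_spike_finite[OF finite.emptyI _ powr_integral]) (auto simp: powr_realpow)
  then show ?thesis
    by (simp add: has_integral_Icc_iff_Ioo)
qed

lemma has_integral_bell_poly_mult_power_one_minus:
  "((\<lambda>t::real. (1 - t) ^ q * bell_poly n t) has_integral
     (\<Sum>k\<le>n. real (Stirling n k) * (fact k * fact q / fact (k + q + 1)))) {0..1}"
proof -
  have "((\<lambda>t::real. \<Sum>k\<le>n. real (Stirling n k) * (t ^ k * (1 - t) ^ q)) has_integral
      (\<Sum>k\<le>n. real (Stirling n k) * (fact k * fact q / fact (k + q + 1)))) {0..1}"
    by (intro has_integral_sum has_integral_mult_right has_integral_power_mult_power_one_minus) auto
  then show ?thesis
    by (simp add: bell_poly_def sum_distrib_left algebra_simps)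
qed

lemma Suc_mult_Beta_eq_inverse_binomial:
  "real (Suc q) * (fact k * fact q / fact (k + q + 1)) = 1 / real ((k + Suc q) choose Suc q)"
  unfolding binomial_fact[of "Suc q" "k + Suc q", OF le_add2] by (simp add: field_simps)

theorem mainTheorem19:
  fixes n p :: nat
  assumes "p \<ge> 1"
  shows "pBell n p = real p * integral {0..1} (\<lambda>t::real. (1 - t) ^ (p - 1) * bell_poly n t)"
proof -
  obtain q where p: "p = Suc q"
    using assms by (cases p) auto
  have "real p * integral {0..1} (\<lambda>t::real. (1 - t) ^ (p - 1) * bell_poly n t) =
      (\<Sum>k\<le>n. real (Stirling n k) * (real (Suc q) * (fact k * fact q / fact (k + q + 1))))"
    unfolding p integral_unique[OF has_integral_bell_poly_mult_power_one_minus]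
    by (simp add: sum_distrib_left algebra_simps)
  also have "\<dots> = (\<Sum>k\<le>n. real (Stirling n k) / real ((k + p) choose p))"
    unfolding p Suc_mult_Beta_eq_inverse_binomial by simp
  finally show ?thesis
    by (simp add: pBell_eq_sum_Stirling)
qed

end
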